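(* Let $f(x_1,\dots,x_M)=\sum_{\mathbf i\in\mathscr S}p_{\mathbf i}f_{i_1}(x_1)\cdots f_{i_M}(x_M)$ be an $\mathrm{MMEam}$ density and fix $\mathbf z=(z_1,\dots,z_M)\in[0,\infty)^M$ with $\overline F(z_1,\dots,z_M)=\int_{z_1}^\infty\cdots\int_{z_M}^\infty f(y_1,\dots,y_M)\,dy_1\cdots dy_M>0$. Then the residual lifetime density $f^{\mathrm{RL}}_{\mathbf z}(x_1,\dots,x_M)=f(x_1+z_1,\dots,x_M+z_M)/\overline F(z_1,\dots,z_M)$, $x_k\ge0$, belongs to $\mathrm{MMEam}$ and $$f^{\mathrm{RL}}_{\mathbf z}(x_1,\dots,x_M)=\sum_{\mathbf i\in\mathscr S}p^{\mathrm{RL}}_{\mathbf z,\mathbf i}f^{\mathrm{RL}}_{z_1,i_1}(x_1)\cdots f^{\mathrm{RL}}_{z_M,i_M}(x_M),$$ where for $z\ge0$ and $1\le j\le L$, $$f^{\mathrm{RL}}_{z,j}(x)=\alpha^{\mathrm{RL}}_{z,j}e^{T_jx}t_j,\qquad \alpha^{\mathrm{RL}}_{z,j}=\frac{1}{\alpha_je^{T_jz}l_j}\,\alpha_je^{T_jz},$$ and $$p^{\mathrm{RL}}_{\mathbf z,\mathbf i}=\frac{p_{\mathbf i}\,(\alpha_{i_1}e^{T_{i_1}z_1}l_{i_1})\cdots(\alpha_{i_M}e^{T_{i_M}z_M}l_{i_M})}{\sum_{\mathbf h\in\mathscr S}p_{\mathbf h}\,(\alpha_{h_1}e^{T_{h_1}z_1}l_{h_1})\cdots(\alpha_{h_M}e^{T_{h_M}z_M}l_{h_M})},$$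 with $l_j=(-T_j)^{-1}t_j$.
   Context: An ME density is a probability density on $[0,\infty)$ of the form $g(x)=\alpha e^{Tx}t$ ($\alpha$ real row vector, $T$ real square matrix, $t$ real column vector); triples are taken with all eigenvalues of $T$ having strictly negative real part, so $T$ is invertible and with $l=(-T)^{-1}t$ the survival function is $\alpha e^{Tx}l$. MMEam: fix $L,M\in\mathbb N_+$ and ME densities $f_1,\dots,f_L$ with triples $(\alpha_j,T_j,t_j)$. Let $\mathscr S=\{1,\dots,L\}^M$, $\mathbf i=(i_1,\dots,i_M)$, and real numbers $p_{\mathbf i}$ (possibly negative) with $\sum p_{\mathbf i}=1$. Then $f(x_1,\dots,x_M)=\sum_{\mathbf i}p_{\mathbf i}f_{i_1}(x_1)\cdots f_{i_M}(x_M)$ on $[0,\infty)^M$ is an MMEam density if $f\ge0$; $\mathrm{MMEam}$ is the class of such densities. *)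

theory Defs
  imports "HOL-Analysis.Analysis" "Jordan_Normal_Form.Char_Poly" "Jordan_Normal_Form.Gauss_Jordan_Elimination"
begin

definition mat_exp :: "real mat \<Rightarrow> real mat" where
  "mat_exp A = mat (dim_row A) (dim_col A)
     (\<lambda>(i,j). \<Sum>k. ((1 / fact k) \<cdot>\<^sub>m (A ^\<^sub>m k)) $$ (i,j))"

definition vec_mat :: "real vec \<Rightarrow> real mat \<Rightarrow> real vec" where
  "vec_mat v A = vec (dim_col A) (\<lambda>j. scalar_prod v (col A j))"

definition ME_triple :: "nat \<Rightarrow> real vec \<Rightarrow> real mat \<Rightarrow> real vec \<Rightarrow> bool" where
  "ME_triple n \<alpha> T t \<longleftrightarrow> \<alpha> \<in> carrier_vec n \<and> T \<in> carrier_mat n n \<and> t \<in> carrier_vec n \<and>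
     (\<forall>c. eigenvalue (map_mat complex_of_real T) c \<longrightarrow> Re c < 0)"

definition ME_fun :: "real vec \<Rightarrow> real mat \<Rightarrow> real vec \<Rightarrow> real \<Rightarrow> real" where
  "ME_fun \<alpha> T t x = scalar_prod \<alpha> (mat_exp (x \<cdot>\<^sub>m T) *\<^sub>v t)"

definition ME_l :: "real mat \<Rightarrow> real vec \<Rightarrow> real vec" where
  "ME_l T t = the (mat_inverse (- T)) *\<^sub>v t"

definition ME_density_triple :: "nat \<Rightarrow> real vec \<Rightarrow> real mat \<Rightarrow> real vec \<Rightarrow> bool" where
  "ME_density_triple n \<alpha> T t \<longleftrightarrow> ME_triple n \<alpha> T t \<and>
     (\<forall>x\<ge>0. ME_fun \<alpha> T t x \<ge> 0) \<and> (ME_fun \<alpha> T t has_integral 1) {0..}"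

definition ME_density :: "(real \<Rightarrow> real) \<Rightarrow> bool" where
  "ME_density g \<longleftrightarrow> (\<exists>n \<alpha> T t. ME_density_triple n \<alpha> T t \<and> (\<forall>x\<ge>0. g x = ME_fun \<alpha> T t x))"

text \<open>Index set S = {1..L}^M, multi-indices as functions on {0..<M}.\<close>
definition idx_set :: "nat \<Rightarrow> nat \<Rightarrow> (nat \<Rightarrow> nat) set" where
  "idx_set L M = PiE {..<M} (\<lambda>_. {1..L})"

text \<open>Points of [0,\<infinity>)^M, represented as nat \<Rightarrow> real on the coordinates 0..<M.\<close>
definition nonneg_pt :: "nat \<Rightarrow> (nat \<Rightarrow> real) \<Rightarrow> bool" where
  "nonneg_pt M x \<longleftrightarrow> (\<forall>k<M. 0 \<le> x k)"

definition MMEam :: "nat \<Rightarrow> ((nat \<Rightarrow> real) \<Rightarrow> real) \<Rightarrow> bool" where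
  "MMEam M f \<longleftrightarrow> (\<exists>L (g :: nat \<Rightarrow> real \<Rightarrow> real) (p :: (nat \<Rightarrow> nat) \<Rightarrow> real).
     1 \<le> L \<and> (\<forall>j\<in>{1..L}. ME_density (g j)) \<and> (\<Sum>i\<in>idx_set L M. p i) = 1 \<and>
     (\<forall>x. nonneg_pt M x \<longrightarrow> f x = (\<Sum>i\<in>idx_set L M. p i * (\<Prod>k<M. g (i k) (x k)))) \<and>
     (\<forall>x. nonneg_pt M x \<longrightarrow> 0 \<le> f x))"

end

theory Submission
  imports Defs "Jordan_Normal_Form.Spectral_Radius" "HOL-Real_Asymp.Real_Asymp"
begin

text \<open>The survival function S_j(z) = \<alpha>_j exp(T_j z) l_j of the ME density f_j satisfies
  S_j' = -f_j, and S_j(z) tends to 0 because exp(T_j z) decays when all eigenvalues of T_j have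
  negative real part; hence S_j is the tail integral of f_j. From exp(T(x + z)) = exp(Tz) exp(Tx)
  we get f_j(x + z) = S_j(z) f^RL_{z,j}(x), also when S_j(z) = 0, since f_j then vanishes beyond z.
  Multiplying out, f(x + z) is the sum over i of p_i prod_k S_{i_k}(z_k) times prod_k f^RL_{z_k,i_k}(x_k),
  while by Fubini the weights p_i prod_k S_{i_k}(z_k) sum to Fbar(z). The residual components
  depend on the coordinate k as well, so the result is an MMEam mixture over the L M densities
  indexed by pairs (k, j).\<close>

section \<open>The matrix exponential as a power series\<close>

text \<open>\<open>mexp A s = exp (sA)\<close>, with the scalar \<open>s\<close> kept separate and entries in any complete
  normed field, so that it can be differentiated in \<open>s\<close> and a real matrix can be complexified.\<close>
definition mexp :: "'a::{real_normed_field,banach} mat \<Rightarrow> 'a \<Rightarrow> 'a mat" where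
  "mexp A s = mat (dim_row A) (dim_col A) (\<lambda>(i,j). \<Sum>k. (A ^\<^sub>m k) $$ (i,j) / fact k * s ^ k)"

lemma mexp_dim [simp]: "dim_row (mexp A s) = dim_row A" "dim_col (mexp A s) = dim_col A"
  unfolding mexp_def by auto

lemma mexp_carrier [simp]: "A \<in> carrier_mat n n \<Longrightarrow> mexp A s \<in> carrier_mat n n"
  unfolding mexp_def by auto

lemma index_mexp:
  "A \<in> carrier_mat n n \<Longrightarrow> i < n \<Longrightarrow> j < n \<Longrightarrow>
    mexp A s $$ (i,j) = (\<Sum>k. (A ^\<^sub>m k) $$ (i,j) / fact k * s ^ k)"
  unfolding mexp_def by auto

lemma index_mult_mat_sum:
  assumes "A \<in> carrier_mat n m" "B \<in> carrier_mat m n'" "i < n" "j < n'"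
  shows "(A * B) $$ (i,j) = (\<Sum>l<m. A $$ (i,l) * B $$ (l,j))"
  using assms by (auto simp: scalar_prod_def atLeast0LessThan intro!: sum.cong)

lemma pow_mat_norm_bound:
  fixes A :: "'a::{real_normed_field,banach} mat"
  assumes A: "A \<in> carrier_mat n n"
  shows "\<exists>c\<ge>1. \<forall>k. norm_bound (A ^\<^sub>m k) (c ^ k)"
proof -
  obtain b where b: "norm_bound A b" "0 \<le> b"
    using norm_bound_max[of A] norm_ge_zero unfolding norm_bound_def by (meson dual_order.trans le_cases)
  define c where "c = max 1 (b * real n)"
  have "norm_bound (A ^\<^sub>m k) (c ^ k)" for k
  proof (induct k)
    case 0
    show ?case using A unfolding norm_bound_def by (auto simp: one_mat_def)
  next
    case (Suc k)
    have "norm_bound (A ^\<^sub>m k * A) (c ^ k * b * of_nat n)"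
      by (rule norm_bound_mult[OF pow_carrier_mat[OF A] A Suc b(1)])
    moreover have "c ^ k * (b * real n) \<le> c ^ k * c"
      unfolding c_def by (intro mult_left_mono) auto
    ultimately show ?case
      unfolding norm_bound_def by (simp only: mult.assoc pow_mat.simps(2) power_Suc2) (meson order_trans)
  qed
  thus ?thesis by (intro exI[of _ c]) (simp add: c_def)
qed

lemma summable_norm_mexp_series:
  fixes A :: "'a::{real_normed_field,banach} mat"
  assumes A: "A \<in> carrier_mat n n" and ij: "i < n" "j < n"
  shows "summable (\<lambda>k. norm ((A ^\<^sub>m k) $$ (i,j) / fact k * s ^ k))"
proof -
  obtain c where "\<And>k. norm_bound (A ^\<^sub>m k) (c ^ k)"
    using pow_mat_norm_bound[OF A] by blast
  hence c: "norm ((A ^\<^sub>m k) $$ (i,j)) \<le> c ^ k" for k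
    using A ij unfolding norm_bound_def by simp
  show ?thesis
  proof (rule summable_comparison_test'[OF summable_exp[of "c * norm s"]])
    fix k
    have "norm (norm ((A ^\<^sub>m k) $$ (i,j) / fact k * s ^ k))
        = norm ((A ^\<^sub>m k) $$ (i,j)) / fact k * norm s ^ k"
      by (simp add: norm_mult norm_divide norm_power)
    also have "\<dots> \<le> c ^ k / fact k * norm s ^ k"
      by (intro mult_right_mono divide_right_mono c) auto
    also have "\<dots> = inverse (fact k) * (c * norm s) ^ k"
      by (simp add: power_mult_distrib field_simps)
    finally show "norm (norm ((A ^\<^sub>m k) $$ (i,j) / fact k * s ^ k))
        \<le> inverse (fact k) * (c * norm s) ^ k" .
  qed
qed

lemma summable_mexp_series:
  fixes A :: "'a::{real_normed_field,banach} mat"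
  assumes "A \<in> carrier_mat n n" "i < n" "j < n"
  shows "summable (\<lambda>k. (A ^\<^sub>m k) $$ (i,j) / fact k * s ^ k)"
  by (rule summable_norm_cancel[OF summable_norm_mexp_series[OF assms]])

lemma pow_mat_mult_comm:
  fixes A B :: "'a::semiring_1 mat"
  assumes A: "A \<in> carrier_mat n n" and B: "B \<in> carrier_mat n n" and AB: "A * B = B * A"
  shows "A ^\<^sub>m k * B = B * A ^\<^sub>m k"
proof (induct k)
  case 0 then show ?case using A B by simp
next
  case (Suc k)
  have "A ^\<^sub>m Suc k * B = A ^\<^sub>m k * (A * B)" using A B by (simp add: assoc_mult_mat[of _ n n _ n _ n])
  also have "\<dots> = (A ^\<^sub>m k * B) * A" using A B AB by (simp add: assoc_mult_mat[of _ n n _ n _ n])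
  also have "\<dots> = B * A ^\<^sub>m Suc k" using A B Suc by (simp add: assoc_mult_mat[of _ n n _ n _ n])
  finally show ?case .
qed

lemma index_mexp_mult:
  fixes A B :: "'a::{real_normed_field,banach} mat"
  assumes A: "A \<in> carrier_mat n n" and B: "B \<in> carrier_mat n n" and ij: "i < n" "j < n"
  shows "(mexp A s * B) $$ (i,j) = (\<Sum>k. (A ^\<^sub>m k * B) $$ (i,j) / fact k * s ^ k)"
proof -
  have "(mexp A s * B) $$ (i,j) = (\<Sum>m<n. mexp A s $$ (i,m) * B $$ (m,j))"
    by (rule index_mult_mat_sum[OF mexp_carrier[OF A] B ij])
  also have "\<dots> = (\<Sum>m<n. \<Sum>k. (A ^\<^sub>m k) $$ (i,m) / fact k * s ^ k * B $$ (m,j))"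
    using A ij
    by (intro sum.cong refl) (simp only: index_mexp[of A n] suminf_mult2[OF summable_mexp_series[OF A]] lessThan_iff)
  also have "\<dots> = (\<Sum>k. \<Sum>m<n. (A ^\<^sub>m k) $$ (i,m) / fact k * s ^ k * B $$ (m,j))"
    using A ij by (intro suminf_sum[symmetric] summable_mult2 summable_mexp_series[OF A]) auto
  also have "\<dots> = (\<Sum>k. (A ^\<^sub>m k * B) $$ (i,j) / fact k * s ^ k)"
    unfolding index_mult_mat_sum[OF pow_carrier_mat[OF A] B ij]
    by (simp add: sum_distrib_left sum_divide_distrib ac_simps)
  finally show ?thesis .
qed

lemma index_mult_mexp:
  fixes A B :: "'a::{real_normed_field,banach} mat"
  assumes A: "A \<in> carrier_mat n n" and B: "B \<in> carrier_mat n n" and ij: "i < n" "j < n"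
  shows "(B * mexp A s) $$ (i,j) = (\<Sum>k. (B * A ^\<^sub>m k) $$ (i,j) / fact k * s ^ k)"
proof -
  have "(B * mexp A s) $$ (i,j) = (\<Sum>m<n. B $$ (i,m) * mexp A s $$ (m,j))"
    by (rule index_mult_mat_sum[OF B mexp_carrier[OF A] ij])
  also have "\<dots> = (\<Sum>m<n. \<Sum>k. B $$ (i,m) * ((A ^\<^sub>m k) $$ (m,j) / fact k * s ^ k))"
    using A ij
    by (intro sum.cong refl) (simp only: index_mexp[of A n] suminf_mult[OF summable_mexp_series[OF A]] lessThan_iff)
  also have "\<dots> = (\<Sum>k. \<Sum>m<n. B $$ (i,m) * ((A ^\<^sub>m k) $$ (m,j) / fact k * s ^ k))"
    using A ij by (intro suminf_sum[symmetric] summable_mult summable_mexp_series[OF A]) auto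
  also have "\<dots> = (\<Sum>k. (B * A ^\<^sub>m k) $$ (i,j) / fact k * s ^ k)"
    unfolding index_mult_mat_sum[OF B pow_carrier_mat[OF A] ij]
    by (simp add: sum_distrib_left sum_divide_distrib ac_simps)
  finally show ?thesis .
qed

lemma mexp_mult_comm:
  fixes A B :: "'a::{real_normed_field,banach} mat"
  assumes A: "A \<in> carrier_mat n n" and B: "B \<in> carrier_mat n n" and AB: "A * B = B * A"
  shows "mexp A s * B = B * mexp A s"
proof (rule eq_matI)
  fix i j assume "i < dim_row (B * mexp A s)" "j < dim_col (B * mexp A s)"
  hence ij: "i < n" "j < n" using A B by auto
  show "(mexp A s * B) $$ (i,j) = (B * mexp A s) $$ (i,j)"
    unfolding index_mexp_mult[OF A B ij] index_mult_mexp[OF A B ij] pow_mat_mult_comm[OF A B AB] ..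
qed (use A B in auto)

lemma mexp_zero:
  assumes A: "A \<in> carrier_mat n n"
  shows "mexp A 0 = 1\<^sub>m n"
proof (rule eq_matI)
  fix i j assume "i < dim_row (1\<^sub>m n :: 'a mat)" "j < dim_col (1\<^sub>m n :: 'a mat)"
  hence ij: "i < n" "j < n" by auto
  show "mexp A 0 $$ (i,j) = 1\<^sub>m n $$ (i,j)"
    unfolding index_mexp[OF A ij] powser_zero using A ij by simp
qed (use A in auto)

lemma mexp_has_field_derivative:
  fixes A :: "'a::{real_normed_field,banach} mat"
  assumes A: "A \<in> carrier_mat n n" and ij: "i < n" "j < n"
  shows "((\<lambda>s. mexp A s $$ (i,j)) has_field_derivative (mexp A s * A) $$ (i,j)) (at s)"
proof -
  let ?c = "\<lambda>k. (A ^\<^sub>m k) $$ (i,j) / fact k"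
  have "((\<lambda>s. \<Sum>k. ?c k * s ^ k) has_field_derivative (\<Sum>k. diffs ?c k * s ^ k)) (at s)"
    by (rule termdiffs_strong_converges_everywhere) (rule summable_mexp_series[OF A ij])
  moreover have "(\<Sum>k. diffs ?c k * s ^ k) = (mexp A s * A) $$ (i,j)"
    unfolding index_mexp_mult[OF A A ij] diffs_def by (simp add: fact_Suc del: of_nat_Suc)
  ultimately show ?thesis using index_mexp[OF A ij] by simp
qed

lemma mexp_has_field_derivative_left:
  fixes A :: "'a::{real_normed_field,banach} mat"
  assumes "A \<in> carrier_mat n n" "i < n" "j < n"
  shows "((\<lambda>s. mexp A s $$ (i,j)) has_field_derivative (A * mexp A s) $$ (i,j)) (at s)"
  using mexp_has_field_derivative[OF assms, of s] mexp_mult_comm[OF assms(1,1) refl, of s] by simp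

lemma index_mult_mat_has_field_derivative:
  fixes F G :: "'a::{real_normed_field,banach} \<Rightarrow> 'a mat"
  assumes F: "\<And>x. F x \<in> carrier_mat n n" and G: "\<And>x. G x \<in> carrier_mat n n"
    and F': "F' \<in> carrier_mat n n" and G': "G' \<in> carrier_mat n n"
    and dF: "\<And>i j. i < n \<Longrightarrow> j < n \<Longrightarrow> ((\<lambda>x. F x $$ (i,j)) has_field_derivative F' $$ (i,j)) (at x)"
    and dG: "\<And>i j. i < n \<Longrightarrow> j < n \<Longrightarrow> ((\<lambda>x. G x $$ (i,j)) has_field_derivative G' $$ (i,j)) (at x)"
    and ij: "i < n" "j < n"
  shows "((\<lambda>x. (F x * G x) $$ (i,j)) has_field_derivative (F' * G x + F x * G') $$ (i,j)) (at x)"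
proof -
  have "((\<lambda>x. \<Sum>m<n. F x $$ (i,m) * G x $$ (m,j)) has_field_derivative
      (\<Sum>m<n. F' $$ (i,m) * G x $$ (m,j) + G' $$ (m,j) * F x $$ (i,m))) (at x)"
    by (intro DERIV_sum DERIV_mult dF dG ij) auto
  moreover have "(F' * G x + F x * G') $$ (i,j)
      = (\<Sum>m<n. F' $$ (i,m) * G x $$ (m,j) + G' $$ (m,j) * F x $$ (i,m))"
    using F[of x] G[of x] F' G' ij
    by (simp add: index_mult_mat_sum[of _ n n _ n] sum.distrib ac_simps del: index_mult_mat(1))
  ultimately show ?thesis using index_mult_mat_sum[OF F G ij] by simp
qed

lemma has_field_derivative_zero_imp_eq:
  fixes f :: "'a::{real_normed_field,banach} \<Rightarrow> 'a"
  assumes "\<And>x. (f has_field_derivative 0) (at x)"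
  shows "f x = f y"
  using has_field_derivative_zero_constant[of UNIV f] assms by (metis UNIV_I convex_UNIV)

lemma mexp_add:
  fixes A :: "'a::{real_normed_field,banach} mat"
  assumes A: "A \<in> carrier_mat n n"
  shows "mexp A (a + b) = mexp A a * mexp A b"
proof -
  define K where "K x = mexp A x * mexp A (a + b - x)" for x
  have const: "K x $$ (i,j) = K y $$ (i,j)" if ij: "i < n" "j < n" for x y i j
  proof (rule has_field_derivative_zero_imp_eq[where f = "\<lambda>x. K x $$ (i,j)"])
    fix x
    have dG: "((\<lambda>x. mexp A (a + b - x) $$ (i,j))
        has_field_derivative (- (A * mexp A (a + b - x))) $$ (i,j)) (at x)"
      if "i < n" "j < n" for i j
    proof -
      have "((\<lambda>x. mexp A (a + b - x) $$ (i,j))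
          has_field_derivative (A * mexp A (a + b - x)) $$ (i,j) * (- 1)) (at x)"
        by (rule DERIV_chain2[OF mexp_has_field_derivative_left[OF A that]])
          (auto intro!: derivative_eq_intros)
      thus ?thesis using A that by simp
    qed
    have "((\<lambda>x. K x $$ (i,j)) has_field_derivative
       (mexp A x * A * mexp A (a + b - x) + mexp A x * (- (A * mexp A (a + b - x)))) $$ (i,j)) (at x)"
      unfolding K_def
      by (rule index_mult_mat_has_field_derivative[OF mexp_carrier[OF A] mexp_carrier[OF A] _ _
            mexp_has_field_derivative[OF A] dG ij]) (use A in auto)
    moreover have "mexp A x * A * mexp A (a + b - x) = mexp A x * (A * mexp A (a + b - x))"
      using A by (intro assoc_mult_mat[of _ n n _ n _ n]) auto
    ultimately show "((\<lambda>x. K x $$ (i,j)) has_field_derivative 0) (at x)"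
      using A ij by (simp add: index_mult_mat_sum[of _ n n _ n] sum_negf[symmetric])
  qed
  show ?thesis
  proof (rule eq_matI)
    fix i j assume "i < dim_row (mexp A a * mexp A b)" "j < dim_col (mexp A a * mexp A b)"
    hence ij: "i < n" "j < n" using A by auto
    show "mexp A (a + b) $$ (i,j) = (mexp A a * mexp A b) $$ (i,j)"
      using const[OF ij, of 0 a] A ij unfolding K_def by (simp add: mexp_zero)
  qed (use A in auto)
qed

lemma mexp_minus_mult: "A \<in> carrier_mat n n \<Longrightarrow> mexp A (- x) * mexp A x = 1\<^sub>m n"
  using mexp_add[of A n "- x" x] by (simp add: mexp_zero)

lemma mexp_unique_ode:
  fixes A :: "'a::{real_normed_field,banach} mat"
  assumes A: "A \<in> carrier_mat n n" and Y: "\<And>x. Y x \<in> carrier_mat n n"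
    and dY: "\<And>x i j. i < n \<Longrightarrow> j < n \<Longrightarrow>
      ((\<lambda>x. Y x $$ (i,j)) has_field_derivative (A * Y x) $$ (i,j)) (at x)"
    and Y0: "Y 0 = 1\<^sub>m n"
  shows "Y x = mexp A x"
proof -
  define K where "K x = mexp A (- x) * Y x" for x
  have const: "K x $$ (i,j) = K y $$ (i,j)" if ij: "i < n" "j < n" for x y i j
  proof (rule has_field_derivative_zero_imp_eq[where f = "\<lambda>x. K x $$ (i,j)"])
    fix x
    have dF: "((\<lambda>x. mexp A (- x) $$ (i,j))
        has_field_derivative (- (mexp A (- x) * A)) $$ (i,j)) (at x)"
      if "i < n" "j < n" for i j
    proof -
      have "((\<lambda>x. mexp A (- x) $$ (i,j)) has_field_derivative (mexp A (- x) * A) $$ (i,j) * (- 1)) (at x)"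
        by (rule DERIV_chain2[OF mexp_has_field_derivative[OF A that]])
          (auto intro!: derivative_eq_intros)
      thus ?thesis using A that by simp
    qed
    have "((\<lambda>x. K x $$ (i,j)) has_field_derivative
       ((- (mexp A (- x) * A)) * Y x + mexp A (- x) * (A * Y x)) $$ (i,j)) (at x)"
      unfolding K_def
      by (rule index_mult_mat_has_field_derivative[OF mexp_carrier[OF A] Y _ _ dF dY ij])
        (use A Y in auto)
    moreover have "mexp A (- x) * (A * Y x) = mexp A (- x) * A * Y x"
      using A Y by (intro assoc_mult_mat[of _ n n _ n _ n, symmetric]) auto
    ultimately show "((\<lambda>x. K x $$ (i,j)) has_field_derivative 0) (at x)"
      using A Y[of x] ij by (simp add: index_mult_mat_sum[of _ n n _ n] sum_negf[symmetric])
  qed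
  have K1: "K x = 1\<^sub>m n"
  proof (rule eq_matI)
    fix i j assume "i < dim_row (1\<^sub>m n :: 'a mat)" "j < dim_col (1\<^sub>m n :: 'a mat)"
    hence ij: "i < n" "j < n" by auto
    show "K x $$ (i,j) = 1\<^sub>m n $$ (i,j)"
      using const[OF ij, of x 0] A ij Y0 unfolding K_def by (simp add: mexp_zero)
  qed (use A Y in \<open>auto simp: K_def\<close>)
  have "Y x = (mexp A x * mexp A (- x)) * Y x"
    using mexp_minus_mult[OF A, of "- x"] Y[of x] by simp
  also have "\<dots> = mexp A x * K x"
    unfolding K_def using A Y by (intro assoc_mult_mat[of _ n n _ n _ n]) auto
  finally show ?thesis using K1 A by simp
qed

lemma mexp_affine:
  fixes B :: "'a::{real_normed_field,banach} mat"
  assumes B: "B \<in> carrier_mat n n"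
  shows "mexp (c \<cdot>\<^sub>m B + d \<cdot>\<^sub>m 1\<^sub>m n) s = exp (d * s) \<cdot>\<^sub>m mexp B (c * s)"
proof (rule mexp_unique_ode[symmetric])
  let ?Y = "\<lambda>s. exp (d * s) \<cdot>\<^sub>m mexp B (c * s)"
  show "c \<cdot>\<^sub>m B + d \<cdot>\<^sub>m 1\<^sub>m n \<in> carrier_mat n n" "\<And>s. ?Y s \<in> carrier_mat n n" "?Y 0 = 1\<^sub>m n"
    using B by (auto simp: mexp_zero)
  fix s i j assume ij: "i < n" "j < n"
  have "((\<lambda>s. exp (d * s)) has_field_derivative exp (d * s) * d) (at s)"
    by (auto intro!: derivative_eq_intros)
  from DERIV_mult[OF this DERIV_chain2[OF mexp_has_field_derivative_left[OF B ij]]]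
  have "((\<lambda>s. exp (d * s) * mexp B (c * s) $$ (i,j)) has_field_derivative
      exp (d * s) * d * mexp B (c * s) $$ (i,j) + (B * mexp B (c * s)) $$ (i,j) * c * exp (d * s)) (at s)"
    by (auto intro!: derivative_eq_intros)
  moreover have "((c \<cdot>\<^sub>m B + d \<cdot>\<^sub>m 1\<^sub>m n) * ?Y s) $$ (i,j)
      = exp (d * s) * (c * (B * mexp B (c * s)) $$ (i,j) + d * mexp B (c * s) $$ (i,j))"
    using B ij by (simp add: add_mult_distrib_mat[of _ n n _ _ n] mult_smult_distrib[of _ n n _ n]
        mult_smult_assoc_mat[of _ n n _ n] del: index_mult_mat(1))
  ultimately show "((\<lambda>s. ?Y s $$ (i,j))
      has_field_derivative ((c \<cdot>\<^sub>m B + d \<cdot>\<^sub>m 1\<^sub>m n) * ?Y s) $$ (i,j)) (at s)"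
    using B ij by (simp add: algebra_simps)
qed

lemma eigenvalue_affine:
  fixes B :: "'a::field mat"
  assumes B: "B \<in> carrier_mat n n" and ev: "eigenvalue B \<mu>"
  shows "eigenvalue (c \<cdot>\<^sub>m B + d \<cdot>\<^sub>m 1\<^sub>m n) (c * \<mu> + d)"
proof -
  obtain v where v: "v \<in> carrier_vec n" "v \<noteq> 0\<^sub>v n" "B *\<^sub>v v = \<mu> \<cdot>\<^sub>v v"
    using ev B unfolding eigenvalue_def eigenvector_def by auto
  have "(c \<cdot>\<^sub>m B + d \<cdot>\<^sub>m 1\<^sub>m n) *\<^sub>v v = (c * \<mu> + d) \<cdot>\<^sub>v v"
  proof (rule eq_vecI)
    fix i assume "i < dim_vec ((c * \<mu> + d) \<cdot>\<^sub>v v)"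
    hence i: "i < n" using v by simp
    have "(B *\<^sub>v v) $ i = \<mu> * v $ i" using v(3) i v(1) by (metis index_smult_vec(1) carrier_vecD)
    thus "((c \<cdot>\<^sub>m B + d \<cdot>\<^sub>m 1\<^sub>m n) *\<^sub>v v) $ i = ((c * \<mu> + d) \<cdot>\<^sub>v v) $ i"
      using B v(1) i by (simp add: add_mult_distrib_mat_vec[of _ n n _ v] algebra_simps)
  qed (use B v in auto)
  thus ?thesis using B v unfolding eigenvalue_def eigenvector_def by auto
qed

lemma norm_index_mexp_le:
  fixes B :: "'a::{real_normed_field,banach} mat"
  assumes B: "B \<in> carrier_mat n n" and ij: "i < n" "j < n" and C: "\<And>k. norm_bound (B ^\<^sub>m k) C"
  shows "norm (mexp B s $$ (i,j)) \<le> C * exp (norm s)"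
proof -
  have C': "norm ((B ^\<^sub>m k) $$ (i,j)) \<le> C" for k
    using C[of k] B ij unfolding norm_bound_def by auto
  have sums: "(\<lambda>k. C * (norm s ^ k /\<^sub>R fact k)) sums (C * exp (norm s))"
    by (rule sums_mult[OF exp_converges])
  have "norm (mexp B s $$ (i,j)) \<le> (\<Sum>k. C * (norm s ^ k /\<^sub>R fact k))"
    unfolding index_mexp[OF B ij]
  proof (rule norm_suminf_le)
    fix k
    have "norm ((B ^\<^sub>m k) $$ (i,j) / fact k * s ^ k)
        = norm ((B ^\<^sub>m k) $$ (i,j)) / fact k * norm s ^ k"
      by (simp add: norm_mult norm_divide norm_power)
    also have "\<dots> \<le> C / fact k * norm s ^ k"
      by (intro mult_right_mono divide_right_mono C') auto
    finally show "norm ((B ^\<^sub>m k) $$ (i,j) / fact k * s ^ k) \<le> C * (norm s ^ k /\<^sub>R fact k)"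
      by (simp add: field_simps)
  qed (use sums in \<open>rule sums_summable\<close>)
  thus ?thesis using sums_unique[OF sums] by simp
qed

section \<open>Decay of the matrix exponential of a stable matrix\<close>

lemma cmod_one_plus_mult_less_1:
  fixes l :: complex
  assumes l: "Re l < 0" and h: "0 < h" and small: "h * (cmod l)\<^sup>2 \<le> - Re l"
  shows "cmod (1 + complex_of_real h * l) < 1"
proof -
  have "(cmod (1 + complex_of_real h * l))\<^sup>2 = (1 + h * Re l)\<^sup>2 + (h * Im l)\<^sup>2"
    by (simp add: cmod_power2)
  also have "\<dots> = 1 + 2 * h * Re l + h * (h * (cmod l)\<^sup>2)"
    using cmod_power2[of l] by (simp add: power2_eq_square algebra_simps)
  also have "\<dots> \<le> 1 + h * Re l"
    using mult_left_mono[OF small, of h] h by simp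
  also have "\<dots> < 1" using mult_pos_neg[OF h l] by simp
  finally show ?thesis by (simp add: power_less_one_iff abs_less_iff)
qed

lemma stable_contraction:
  fixes S :: "complex set"
  assumes fin: "finite S" and stable: "\<And>l. l \<in> S \<Longrightarrow> Re l < 0"
  obtains h r where "0 < h" "0 < r" "r < 1"
    "\<And>l. l \<in> S \<Longrightarrow> cmod (1 + complex_of_real h * l) < r"
proof -
  define h where "h = Min (insert 1 ((\<lambda>l. - Re l / (cmod l)\<^sup>2) ` S))"
  have cmod_pos: "0 < (cmod l)\<^sup>2" if "l \<in> S" for l
    using stable[OF that] by auto
  have ratio_pos: "0 < - Re l / (cmod l)\<^sup>2" if "l \<in> S" for l
    by (intro divide_pos_pos) (use stable[OF that] cmod_pos[OF that] in auto)
  have h0: "0 < h"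
    unfolding h_def using fin ratio_pos by (subst Min_gr_iff) auto
  have lt1: "cmod (1 + complex_of_real h * l) < 1" if "l \<in> S" for l
  proof (rule cmod_one_plus_mult_less_1[OF stable[OF that] h0])
    have "h \<le> - Re l / (cmod l)\<^sup>2" unfolding h_def using fin that by (intro Min_le) auto
    thus "h * (cmod l)\<^sup>2 \<le> - Re l" using cmod_pos[OF that] by (simp add: field_simps)
  qed
  define r where "r = Max (insert (1/2) ((\<lambda>l. cmod (1 + complex_of_real h * l)) ` S))"
  have r: "1/2 \<le> r" "r < 1"
    unfolding r_def using fin lt1 by (intro Max_ge, auto simp: Max_less_iff)
  have "cmod (1 + complex_of_real h * l) \<le> r" if "l \<in> S" for l
    unfolding r_def using fin that by (intro Max_ge) auto
  with r show thesis by (intro that[of h "(1 + r) / 2"] h0) fastforce+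
qed

lemma stable_eq_affine_contraction:
  fixes A :: "complex mat"
  assumes A: "A \<in> carrier_mat n n" and n: "0 < n" and stable: "\<And>c. eigenvalue A c \<Longrightarrow> Re c < 0"
  obtains h r B where "0 < h" "0 < r" "r < 1" "B \<in> carrier_mat n n" "spectral_radius B < 1"
    "A = complex_of_real (r / h) \<cdot>\<^sub>m B + complex_of_real (- 1 / h) \<cdot>\<^sub>m 1\<^sub>m n"
proof -
  obtain h r where h: "0 < h" and r: "0 < r" "r < 1"
    and hr: "\<And>l. l \<in> spectrum A \<Longrightarrow> cmod (1 + complex_of_real h * l) < r"
    using stable_contraction[OF card_finite_spectrum(1)[OF A]] stable unfolding spectrum_def by blast
  define B where "B = (1 / complex_of_real r) \<cdot>\<^sub>m (1\<^sub>m n + complex_of_real h \<cdot>\<^sub>m A)"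
  have B: "B \<in> carrier_mat n n" unfolding B_def using A by simp
  have A_eq: "A = complex_of_real (r / h) \<cdot>\<^sub>m B + complex_of_real (- 1 / h) \<cdot>\<^sub>m 1\<^sub>m n"
    by (rule eq_matI) (use A h r in \<open>auto simp: B_def field_simps\<close>)
  have "cmod \<mu> < 1" if "eigenvalue B \<mu>" for \<mu>
  proof -
    have "eigenvalue A (complex_of_real (r / h) * \<mu> + complex_of_real (- 1 / h))"
      by (subst A_eq) (rule eigenvalue_affine[OF B that])
    hence "complex_of_real (r / h) * \<mu> + complex_of_real (- 1 / h) \<in> spectrum A"
      unfolding spectrum_def by simp
    from hr[OF this] have "cmod (complex_of_real r * \<mu>) < r" using h by (simp add: field_simps)
    thus ?thesis using r by (simp add: norm_mult)
  qed
  hence "spectral_radius B < 1"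
    using card_finite_spectrum(1)[OF B] spectrum_non_empty[OF B n]
    unfolding spectral_radius_def by (subst Max_less_iff) (auto simp: spectrum_def)
  from h r B this A_eq show thesis by (rule that)
qed

text \<open>Writing \<open>A = (r/h) B - 1/h\<close>, we get \<open>exp (sA) = exp (-s/h) exp ((rs/h) B)\<close>, and the
  powers of \<open>B\<close> are bounded because its spectral radius is below 1.\<close>
lemma stable_mexp_exponential_bound:
  fixes A :: "complex mat"
  assumes A: "A \<in> carrier_mat n n" and stable: "\<And>c. eigenvalue A c \<Longrightarrow> Re c < 0"
    and ij: "i < n" "j < n"
  obtains C a where "0 < a"
    "\<And>x. 0 \<le> x \<Longrightarrow> norm (mexp A (complex_of_real x) $$ (i,j)) \<le> C * exp (- a * x)"
proof -
  have n: "0 < n" using ij by simp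
  obtain h r B where h: "0 < h" and r: "0 < r" "r < 1" and B: "B \<in> carrier_mat n n"
    and rad: "spectral_radius B < 1"
    and A_eq: "A = complex_of_real (r / h) \<cdot>\<^sub>m B + complex_of_real (- 1 / h) \<cdot>\<^sub>m 1\<^sub>m n"
    by (rule stable_eq_affine_contraction[OF A n stable])
  obtain C where C: "\<And>k. norm_bound (B ^\<^sub>m k) C"
    using spectral_radius_jnf_norm_bound_less_1_upper_triangular[OF B rad] by blast
  show thesis
  proof (rule that[of "(1 - r) / h" C])
    show "0 < (1 - r) / h" using h r by simp
    fix x :: real assume x: "0 \<le> x"
    have "mexp A (complex_of_real x) $$ (i,j)
        = exp (complex_of_real (- x / h)) * mexp B (complex_of_real (r * x / h)) $$ (i,j)"
      using B ij by (subst A_eq, subst mexp_affine[OF B]) (simp add: field_simps)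
    hence "norm (mexp A (complex_of_real x) $$ (i,j))
        = exp (- x / h) * norm (mexp B (complex_of_real (r * x / h)) $$ (i,j))"
      by (simp add: norm_mult exp_of_real[symmetric] del: of_real_divide of_real_mult)
    also have "\<dots> \<le> exp (- x / h) * (C * exp (r * x / h))"
      using norm_index_mexp_le[OF B ij C, of "complex_of_real (r * x / h)"] x h r
      by (intro mult_left_mono) (auto simp del: of_real_divide of_real_mult)
    also have "\<dots> = C * exp (- x / h + r * x / h)"
      by (simp only: exp_add ac_simps)
    also have "- x / h + r * x / h = - ((1 - r) / h) * x"
      using h by (simp add: field_simps)
    finally show "norm (mexp A (complex_of_real x) $$ (i,j)) \<le> C * exp (- ((1 - r) / h) * x)" .
  qed
qed

lemma of_real_index_mexp:
  fixes T :: "real mat"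
  assumes T: "T \<in> carrier_mat n n" and ij: "i < n" "j < n"
  shows "complex_of_real (mexp T x $$ (i,j))
    = mexp (map_mat complex_of_real T) (complex_of_real x) $$ (i,j)"
proof -
  have "complex_of_real (mexp T x $$ (i,j))
      = (\<Sum>k. complex_of_real ((T ^\<^sub>m k) $$ (i,j) / fact k * x ^ k))"
    unfolding index_mexp[OF T ij] by (rule suminf_of_real[OF summable_mexp_series[OF T ij]])
  also have "\<dots> = mexp (map_mat complex_of_real T) (complex_of_real x) $$ (i,j)"
    using T ij by (simp add: index_mexp[of _ n] of_real_hom.mat_hom_pow[OF T, symmetric])
  finally show ?thesis .
qed

lemma index_mexp_tendsto_0:
  fixes T :: "real mat"
  assumes T: "T \<in> carrier_mat n n"
    and stable: "\<And>c. eigenvalue (map_mat complex_of_real T) c \<Longrightarrow> Re c < 0"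
    and ij: "i < n" "j < n"
  shows "((\<lambda>x. mexp T x $$ (i,j)) \<longlongrightarrow> 0) at_top"
proof -
  have "map_mat complex_of_real T \<in> carrier_mat n n" using T by simp
  then obtain C a where a: "0 < a" and bound: "\<And>x. 0 \<le> x \<Longrightarrow>
      norm (mexp (map_mat complex_of_real T) (complex_of_real x) $$ (i,j)) \<le> C * exp (- a * x)"
    using stable_mexp_exponential_bound[OF _ stable ij] by blast
  show ?thesis
  proof (rule Lim_null_comparison)
    show "\<forall>\<^sub>F x in at_top. norm (mexp T x $$ (i,j)) \<le> C * exp (- a * x)"
      using bound by (auto simp: eventually_at_top_linorder of_real_index_mexp[OF T ij, symmetric])
    show "((\<lambda>x. C * exp (- a * x)) \<longlongrightarrow> 0) at_top"
      using a by real_asymp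
  qed
qed

lemma pow_mat_smult:
  fixes A :: "'a::comm_ring_1 mat"
  assumes A: "A \<in> carrier_mat n n"
  shows "(a \<cdot>\<^sub>m A) ^\<^sub>m k = a ^ k \<cdot>\<^sub>m (A ^\<^sub>m k)"
proof (induct k)
  case 0 show ?case using A by (intro eq_matI) auto
next
  case (Suc k)
  have "(a \<cdot>\<^sub>m A) ^\<^sub>m Suc k = (a ^ k \<cdot>\<^sub>m A ^\<^sub>m k) * (a \<cdot>\<^sub>m A)" using Suc by simp
  also have "\<dots> = a ^ Suc k \<cdot>\<^sub>m (A ^\<^sub>m Suc k)"
    using A by (simp add: mult_smult_assoc_mat[of _ n n _ n] mult_smult_distrib[of _ n n _ n])
      (intro eq_matI, auto)
  finally show ?case .
qed

lemma mat_exp_eq_mexp: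
  assumes T: "T \<in> carrier_mat n n"
  shows "mat_exp (x \<cdot>\<^sub>m T) = mexp T x"
  using T by (intro eq_matI) (auto simp: mat_exp_def index_mexp pow_mat_smult ac_simps)

lemma vec_mat_scalar_prod:
  assumes "A \<in> carrier_mat n n" "v \<in> carrier_vec n" "w \<in> carrier_vec n"
  shows "vec_mat v A \<bullet> w = v \<bullet> (A *\<^sub>v w)"
  using assoc_scalar_prod[OF assms(2,1,3)] assms(1) unfolding vec_mat_def mult_mat_vec_def by simp

lemma scalar_prod_mult_mat_vec_sum:
  assumes "A \<in> carrier_mat n n" "v \<in> carrier_vec n" "w \<in> carrier_vec n"
  shows "v \<bullet> (A *\<^sub>v w) = (\<Sum>i<n. \<Sum>j<n. v $ i * (A $$ (i,j) * w $ j))"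
  using assms by (simp add: scalar_prod_def atLeast0LessThan sum_distrib_left)

lemma has_field_derivative_scalar_prod_mexp:
  assumes T: "T \<in> carrier_mat n n" and v: "v \<in> carrier_vec n" and w: "w \<in> carrier_vec n"
  shows "((\<lambda>x. v \<bullet> (mexp T x *\<^sub>v w)) has_real_derivative v \<bullet> (mexp T x *\<^sub>v (T *\<^sub>v w))) (at x)"
proof -
  have "((\<lambda>x. \<Sum>i<n. \<Sum>j<n. v $ i * (mexp T x $$ (i,j) * w $ j)) has_real_derivative
      (\<Sum>i<n. \<Sum>j<n. v $ i * ((mexp T x * T) $$ (i,j) * w $ j))) (at x)"
    by (intro DERIV_sum DERIV_cmult DERIV_cmult_right mexp_has_field_derivative[OF T]) auto
  moreover have "v \<bullet> (mexp T x *\<^sub>v (T *\<^sub>v w))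
      = (\<Sum>i<n. \<Sum>j<n. v $ i * ((mexp T x * T) $$ (i,j) * w $ j))"
    using T v w by (simp add: assoc_mult_mat_vec[of _ n n _ n, symmetric]
        scalar_prod_mult_mat_vec_sum[OF mult_carrier_mat[OF mexp_carrier[OF T] T] v w]
        del: index_mult_mat(1))
  ultimately show ?thesis
    using T v w by (simp add: scalar_prod_mult_mat_vec_sum[of _ n])
qed

section \<open>Survival function and residual lifetime of an ME density\<close>

definition ME_surv :: "real vec \<Rightarrow> real mat \<Rightarrow> real vec \<Rightarrow> real \<Rightarrow> real" where
  "ME_surv \<alpha> T t z = \<alpha> \<bullet> (mat_exp (z \<cdot>\<^sub>m T) *\<^sub>v ME_l T t)"

definition ME_residual :: "real vec \<Rightarrow> real mat \<Rightarrow> real vec \<Rightarrow> real \<Rightarrow> real vec" where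
  "ME_residual \<alpha> T t z = (1 / ME_surv \<alpha> T t z) \<cdot>\<^sub>v vec_mat \<alpha> (mat_exp (z \<cdot>\<^sub>m T))"

locale ME_nonneg =
  fixes n :: nat and \<alpha> :: "real vec" and T :: "real mat" and t :: "real vec"
  assumes triple: "ME_triple n \<alpha> T t"
    and nonneg: "\<And>x. 0 \<le> x \<Longrightarrow> 0 \<le> ME_fun \<alpha> T t x"
begin

lemma carrier: "T \<in> carrier_mat n n" "\<alpha> \<in> carrier_vec n" "t \<in> carrier_vec n"
  using triple unfolding ME_triple_def by auto

lemma stable: "eigenvalue (map_mat complex_of_real T) c \<Longrightarrow> Re c < 0"
  using triple unfolding ME_triple_def by auto

lemma ME_fun_eq: "ME_fun \<alpha> T t x = \<alpha> \<bullet> (mexp T x *\<^sub>v t)"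
  unfolding ME_fun_def mat_exp_eq_mexp[OF carrier(1)] ..

lemma ME_surv_eq: "ME_surv \<alpha> T t x = \<alpha> \<bullet> (mexp T x *\<^sub>v ME_l T t)"
  unfolding ME_surv_def mat_exp_eq_mexp[OF carrier(1)] ..

lemma mat_inverse_uminus:
  obtains B where "mat_inverse (- T) = Some B" "(- T) * B = 1\<^sub>m n" "B \<in> carrier_mat n n"
proof -
  have mT: "- T \<in> carrier_mat n n" using carrier by simp
  have "\<not> eigenvalue T 0"
    using of_real_hom.eigenvalue_hom[OF carrier(1), of 0] stable by force
  moreover have "char_matrix T 0 = T"
    using carrier(1) by (intro eq_matI) (auto simp: char_matrix_def)
  ultimately have "det (- T) \<noteq> 0"
    using carrier(1) by (simp add: eigenvalue_det det_0_negate[OF carrier(1)])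
  hence "- T \<in> Units (ring_mat TYPE(real) n undefined)" by (rule det_non_zero_imp_unit[OF mT])
  then obtain B where "mat_inverse (- T) = Some B"
    using mat_inverse(1)[OF mT, of undefined] by (cases "mat_inverse (- T)") auto
  with mat_inverse(2)[OF mT this] show thesis by (intro that) auto
qed

lemma ME_l_carrier: "ME_l T t \<in> carrier_vec n"
proof -
  obtain B where "mat_inverse (- T) = Some B" "B \<in> carrier_mat n n" by (rule mat_inverse_uminus)
  thus ?thesis using carrier(3) by (simp add: ME_l_def)
qed

lemma mult_ME_l: "T *\<^sub>v ME_l T t = - t"
proof -
  obtain B where B: "mat_inverse (- T) = Some B" "(- T) * B = 1\<^sub>m n" "B \<in> carrier_mat n n"
    by (rule mat_inverse_uminus)
  have "(- T) *\<^sub>v ME_l T t = t"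
    using carrier B by (simp add: ME_l_def assoc_mult_mat_vec[of _ n n _ n, symmetric])
  thus ?thesis
    using carrier ME_l_carrier by (metis carrier_matD(2) carrier_vecD uminus_mult_mat_vec uminus_uminus_vec)
qed

lemma ME_surv_has_real_derivative: "(ME_surv \<alpha> T t has_real_derivative - ME_fun \<alpha> T t x) (at x)"
proof -
  have "\<alpha> \<bullet> (mexp T x *\<^sub>v (T *\<^sub>v ME_l T t)) = - ME_fun \<alpha> T t x"
    using carrier unfolding mult_ME_l ME_fun_eq
    by (simp add: scalar_prod_mult_mat_vec_sum[of _ n] sum_negf)
  thus ?thesis
    using has_field_derivative_scalar_prod_mexp[OF carrier(1,2) ME_l_carrier, of x]
    unfolding ME_surv_eq[abs_def] by simp
qed

lemma isCont_ME_fun: "isCont (ME_fun \<alpha> T t) x"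
  using has_field_derivative_scalar_prod_mexp[OF carrier(1,2,3), THEN DERIV_isCont, of x]
  unfolding ME_fun_eq[abs_def] .

lemma ME_surv_tendsto_0: "(ME_surv \<alpha> T t \<longlongrightarrow> 0) at_top"
proof -
  have "((\<lambda>x. \<Sum>i<n. \<Sum>j<n. \<alpha> $ i * (mexp T x $$ (i,j) * ME_l T t $ j)) \<longlongrightarrow>
      (\<Sum>i<n. \<Sum>j<n. \<alpha> $ i * (0 * ME_l T t $ j))) at_top"
    by (intro tendsto_intros index_mexp_tendsto_0[OF carrier(1) stable]) auto
  thus ?thesis
    unfolding ME_surv_eq[abs_def]
      scalar_prod_mult_mat_vec_sum[OF mexp_carrier[OF carrier(1)] carrier(2) ME_l_carrier]
    by simp
qed

lemma ME_surv_eq_set_integral: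
  assumes "0 \<le> a + w"
  shows "set_integrable lborel {a<..} (\<lambda>x. ME_fun \<alpha> T t (x + w))"
    and "(LINT x:{a<..}|lborel. ME_fun \<alpha> T t (x + w)) = ME_surv \<alpha> T t (a + w)"
proof -
  define F where "F x = - ME_surv \<alpha> T t (x + w)" for x
  have F: "(F has_real_derivative ME_fun \<alpha> T t (x + w)) (at x)" for x
  proof -
    have "((\<lambda>x. ME_surv \<alpha> T t (x + w)) has_real_derivative - ME_fun \<alpha> T t (x + w) * 1) (at x)"
      by (rule DERIV_chain2[OF ME_surv_has_real_derivative]) (auto intro!: derivative_eq_intros)
    thus ?thesis unfolding F_def using DERIV_minus by fastforce
  qed
  have lim_a: "((F \<circ> real_of_ereal) \<longlongrightarrow> F a) (at_right (ereal a))"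
    unfolding ereal_tendsto_simps
    by (rule tendsto_mono[OF at_le[OF subset_UNIV]]) (use DERIV_isCont[OF F] in \<open>simp add: isCont_def\<close>)
  have lim_infinity: "((F \<circ> real_of_ereal) \<longlongrightarrow> 0) (at_left \<infinity>)"
    using tendsto_minus[OF filterlim_compose[OF ME_surv_tendsto_0
        filterlim_tendsto_add_at_top[OF tendsto_const[of w] filterlim_ident]]]
    unfolding ereal_tendsto_simps F_def by (simp add: add.commute)
  have cont: "isCont (\<lambda>x. ME_fun \<alpha> T t (x + w)) x" for x
    by (rule continuous_at_compose[OF _ isCont_ME_fun, unfolded o_def]) (auto intro!: continuous_intros)
  have "set_integrable lborel (einterval a \<infinity>) (\<lambda>x. ME_fun \<alpha> T t (x + w))"
    "(LBINT x=ereal a..\<infinity>. ME_fun \<alpha> T t (x + w)) = 0 - F a"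
    by (rule interval_integral_FTC_nonneg[OF _ F cont _ lim_a lim_infinity];
        use assms in \<open>auto intro!: nonneg\<close>)+
  moreover have "einterval a \<infinity> = {a<..}" unfolding einterval_def by auto
  ultimately show "set_integrable lborel {a<..} (\<lambda>x. ME_fun \<alpha> T t (x + w))"
    "(LINT x:{a<..}|lborel. ME_fun \<alpha> T t (x + w)) = ME_surv \<alpha> T t (a + w)"
    unfolding interval_lebesgue_integral_def F_def by simp_all
qed

lemma ME_surv_nonneg:
  assumes z: "0 \<le> z"
  shows "0 \<le> ME_surv \<alpha> T t z"
proof -
  have "0 \<le> (LINT x:{0<..}|lborel. ME_fun \<alpha> T t (x + z))"
    unfolding set_lebesgue_integral_def
    by (rule Bochner_Integration.integral_nonneg) (use z in \<open>auto simp: indicator_def intro!: nonneg\<close>)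
  thus ?thesis using ME_surv_eq_set_integral(2)[of 0 z] z by simp
qed

lemma ME_fun_eq_0_if_ME_surv_eq_0:
  assumes z: "0 \<le> z" and surv0: "ME_surv \<alpha> T t z = 0" and y: "z \<le> y"
  shows "ME_fun \<alpha> T t y = 0"
proof -
  have vanish: "ME_surv \<alpha> T t u = 0" if u: "z \<le> u" for u
  proof -
    have "ME_surv \<alpha> T t u \<le> ME_surv \<alpha> T t z"
      by (rule DERIV_nonpos_imp_nonincreasing[OF u])
        (use z ME_surv_has_real_derivative nonneg in fastforce)
    thus ?thesis using ME_surv_nonneg[of u] u z surv0 by simp
  qed
  have "\<forall>\<^sub>F h in at_right 0. (ME_surv \<alpha> T t (y + h) - ME_surv \<alpha> T t y) / h = 0"
    using eventually_at_right_less[of 0] by eventually_elim (use vanish y in simp)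
  hence "((\<lambda>h. (ME_surv \<alpha> T t (y + h) - ME_surv \<alpha> T t y) / h) \<longlongrightarrow> 0) (at_right 0)"
    by (rule tendsto_eventually)
  moreover have "((\<lambda>h. (ME_surv \<alpha> T t (y + h) - ME_surv \<alpha> T t y) / h) \<longlongrightarrow> - ME_fun \<alpha> T t y)
      (at_right 0)"
    using ME_surv_has_real_derivative[of y] unfolding DERIV_def
    by (rule tendsto_mono[OF at_le[OF subset_UNIV]])
  ultimately show ?thesis using tendsto_unique[OF trivial_limit_at_right_real] by fastforce
qed

lemma ME_fun_residual:
  "ME_fun (ME_residual \<alpha> T t z) T t x = ME_fun \<alpha> T t (z + x) / ME_surv \<alpha> T t z"
proof -
  have "vec_mat \<alpha> (mexp T z) \<bullet> (mexp T x *\<^sub>v t) = \<alpha> \<bullet> (mexp T z *\<^sub>v (mexp T x *\<^sub>v t))"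
    by (rule vec_mat_scalar_prod)
      (use carrier mult_mat_vec_carrier[OF mexp_carrier[OF carrier(1)] carrier(3)] in auto)
  also have "\<dots> = \<alpha> \<bullet> (mexp T (z + x) *\<^sub>v t)"
    using carrier by (simp add: mexp_add assoc_mult_mat_vec[of _ n n _ n])
  moreover have "vec_mat \<alpha> (mexp T z) \<in> carrier_vec n"
    using carrier by (simp add: vec_mat_def)
  ultimately show ?thesis
    using carrier by (simp add: ME_fun_eq ME_fun_def ME_residual_def mat_exp_eq_mexp)
qed

lemma ME_fun_shift:
  assumes "0 \<le> z" "0 \<le> x"
  shows "ME_fun \<alpha> T t (x + z) = ME_surv \<alpha> T t z * ME_fun (ME_residual \<alpha> T t z) T t x"
  using ME_fun_eq_0_if_ME_surv_eq_0[of z "x + z"] assms by (simp add: ME_fun_residual add.commute)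

lemma ME_density_triple_residual:
  assumes z: "0 \<le> z" and pos: "0 < ME_surv \<alpha> T t z"
  shows "ME_density_triple n (ME_residual \<alpha> T t z) T t"
  unfolding ME_density_triple_def
proof (intro conjI allI impI)
  show "ME_triple n (ME_residual \<alpha> T t z) T t"
    using triple carrier by (simp add: ME_triple_def ME_residual_def vec_mat_def mat_exp_eq_mexp)
  show "0 \<le> ME_fun (ME_residual \<alpha> T t z) T t x" if "0 \<le> x" for x
    using that z pos by (simp add: ME_fun_residual nonneg)
  have tail: "set_integrable lborel {0<..} (\<lambda>x. ME_fun \<alpha> T t (x + z))"
    "(LINT x:{0<..}|lborel. ME_fun \<alpha> T t (x + z)) = ME_surv \<alpha> T t z"
    using ME_surv_eq_set_integral[of 0 z] z by simp_all
  have "((\<lambda>x. ME_fun \<alpha> T t (x + z)) has_integral ME_surv \<alpha> T t z) {0<..}"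
    using integrable_integral[OF set_borel_integral_eq_integral(1)[OF tail(1)]]
    unfolding set_borel_integral_eq_integral(2)[OF tail(1), symmetric] tail(2) .
  hence "((\<lambda>x. ME_fun \<alpha> T t (x + z) / ME_surv \<alpha> T t z) has_integral 1) {0<..}"
    using has_integral_divide[of _ _ "{0<..}" "ME_surv \<alpha> T t z"] pos by fastforce
  hence "((\<lambda>x. ME_fun \<alpha> T t (x + z) / ME_surv \<alpha> T t z) has_integral 1) {0..}"
    by (rule has_integral_spike_set_eq[THEN iffD1, rotated -1])
      (auto intro: negligible_subset[OF negligible_sing[of 0]])
  moreover have
    "ME_fun (ME_residual \<alpha> T t z) T t = (\<lambda>x. ME_fun \<alpha> T t (x + z) / ME_surv \<alpha> T t z)"
    by (rule ext) (simp add: ME_fun_residual add.commute)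
  ultimately show "(ME_fun (ME_residual \<alpha> T t z) T t has_integral 1) {0..}" by simp
qed

lemma set_integral_Ici_ME_fun:
  assumes z: "0 \<le> z"
  shows "set_integrable lborel {z..} (ME_fun \<alpha> T t)"
    and "(LINT y:{z..}|lborel. ME_fun \<alpha> T t y) = ME_surv \<alpha> T t z"
proof -
  have Ioi: "set_integrable lborel {z<..} (ME_fun \<alpha> T t)"
    "(LINT y:{z<..}|lborel. ME_fun \<alpha> T t y) = ME_surv \<alpha> T t z"
    using ME_surv_eq_set_integral[of z 0] z by simp_all
  have "(\<lambda>y. indicator {z} y *\<^sub>R ME_fun \<alpha> T t y) = (\<lambda>y. ME_fun \<alpha> T t z * indicator {z} y)"
    by (auto simp: indicator_def)
  hence point: "set_integrable lborel {z} (ME_fun \<alpha> T t)" "(LINT y:{z}|lborel. ME_fun \<alpha> T t y) = 0"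
    unfolding set_integrable_def set_lebesgue_integral_def by simp_all
  have split: "{z..} = {z<..} \<union> {z}" by auto
  show "set_integrable lborel {z..} (ME_fun \<alpha> T t)"
    unfolding split by (rule set_integrable_Un[OF Ioi(1) point(1)]) auto
  show "(LINT y:{z..}|lborel. ME_fun \<alpha> T t y) = ME_surv \<alpha> T t z"
    unfolding split by (subst set_integral_Un[OF _ Ioi(1) point(1)]) (use Ioi point in auto)
qed

end

lemma ME_nonneg_if_ME_density_triple: "ME_density_triple n \<alpha> T t \<Longrightarrow> ME_nonneg n \<alpha> T t"
  unfolding ME_density_triple_def ME_nonneg_def by auto

section \<open>Products and mixtures\<close>

lemma indicator_PiE_eq_prod:
  assumes "x \<in> extensional I" "finite I"
  shows "indicator (PiE I A) x = (\<Prod>k\<in>I. indicator (A k) (x k) :: real)"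
proof (cases "\<forall>k\<in>I. x k \<in> A k")
  case True
  thus ?thesis using assms by (simp add: PiE_iff)
next
  case False
  then obtain k where k: "k \<in> I" "x k \<notin> A k" by auto
  hence "x \<notin> PiE I A" by (auto simp: PiE_iff)
  moreover have "(\<Prod>k\<in>I. indicator (A k) (x k) :: real) = 0"
    using k assms by (intro prod_zero bexI[of _ k]) auto
  ultimately show ?thesis by simp
qed

lemma
  fixes f :: "'i \<Rightarrow> real \<Rightarrow> real"
  assumes I: "finite I" and int: "\<And>k. k \<in> I \<Longrightarrow> set_integrable lborel (A k) (f k)"
  shows set_integrable_PiE_prod: "set_integrable (PiM I (\<lambda>_. lborel)) (PiE I A) (\<lambda>x. \<Prod>k\<in>I. f k (x k))"
    and set_integral_PiE_prod:
      "(LINT x:PiE I A|PiM I (\<lambda>_. lborel). (\<Prod>k\<in>I. f k (x k))) = (\<Prod>k\<in>I. LINT y:A k|lborel. f k y)"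
proof -
  interpret product_sigma_finite "\<lambda>_::'i. lborel :: real measure"
    by (auto simp: product_sigma_finite_def intro: sigma_finite_lborel)
  have ind: "indicator (PiE I A) x *\<^sub>R (\<Prod>k\<in>I. f k (x k))
      = (\<Prod>k\<in>I. indicator (A k) (x k) *\<^sub>R f k (x k))"
    if "x \<in> space (PiM I (\<lambda>_. lborel))" for x
    using that I by (simp add: indicator_PiE_eq_prod space_PiM PiE_iff prod.distrib)
  have int': "integrable lborel (\<lambda>y. indicator (A k) y *\<^sub>R f k y)" if "k \<in> I" for k
    using int[OF that] unfolding set_integrable_def .
  have "integrable (PiM I (\<lambda>_. lborel)) (\<lambda>x. \<Prod>k\<in>I. indicator (A k) (x k) *\<^sub>R f k (x k))"
    "integral\<^sup>L (PiM I (\<lambda>_. lborel)) (\<lambda>x. \<Prod>k\<in>I. indicator (A k) (x k) *\<^sub>R f k (x k))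
      = (\<Prod>k\<in>I. integral\<^sup>L lborel (\<lambda>y. indicator (A k) y *\<^sub>R f k y))"
    by (rule product_integrable_prod[OF I], use int' in simp)
      (rule product_integral_prod[OF I], use int' in simp)
  moreover have "integrable (PiM I (\<lambda>_. lborel)) (\<lambda>x. indicator (PiE I A) x *\<^sub>R (\<Prod>k\<in>I. f k (x k)))
      = integrable (PiM I (\<lambda>_. lborel)) (\<lambda>x. \<Prod>k\<in>I. indicator (A k) (x k) *\<^sub>R f k (x k))"
    "integral\<^sup>L (PiM I (\<lambda>_. lborel)) (\<lambda>x. indicator (PiE I A) x *\<^sub>R (\<Prod>k\<in>I. f k (x k)))
      = integral\<^sup>L (PiM I (\<lambda>_. lborel)) (\<lambda>x. \<Prod>k\<in>I. indicator (A k) (x k) *\<^sub>R f k (x k))"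
    by (intro Bochner_Integration.integrable_cong Bochner_Integration.integral_cong refl ind; assumption)+
  ultimately show "set_integrable (PiM I (\<lambda>_. lborel)) (PiE I A) (\<lambda>x. \<Prod>k\<in>I. f k (x k))"
    "(LINT x:PiE I A|PiM I (\<lambda>_. lborel). (\<Prod>k\<in>I. f k (x k))) = (\<Prod>k\<in>I. LINT y:A k|lborel. f k y)"
    unfolding set_integrable_def set_lebesgue_integral_def by simp_all
qed

lemma mem_idx_set: "i \<in> idx_set L M \<Longrightarrow> k < M \<Longrightarrow> i k \<in> {1..L}"
  unfolding idx_set_def by (erule PiE_mem) simp

lemma finite_idx_set: "finite (idx_set L M)"
  unfolding idx_set_def by (rule finite_PiE) auto

definition pair_code :: "nat \<Rightarrow> nat \<Rightarrow> (nat \<Rightarrow> nat) \<Rightarrow> nat \<Rightarrow> nat" where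
  "pair_code L M i = restrict (\<lambda>k. k * L + i k) {..<M}"

lemma pair_code_decode:
  fixes j k L :: nat
  assumes j: "j \<in> {1..L}"
  shows "(k * L + j - 1) div L = k" "(k * L + j - 1) mod L + 1 = j"
proof -
  show div: "(k * L + j - 1) div L = k"
    by (intro div_nat_eqI) (use j in \<open>auto simp: mult.commute\<close>)
  have "k * L + j - 1 = (k * L + j - 1) div L * L + (k * L + j - 1) mod L"
    by (rule div_mult_mod_eq[symmetric])
  hence "k * L + j - 1 = k * L + (k * L + j - 1) mod L" unfolding div .
  thus "(k * L + j - 1) mod L + 1 = j" using j by auto
qed

lemma pair_code_mem: "i \<in> idx_set L M \<Longrightarrow> pair_code L M i \<in> idx_set (L * M) M"
proof -
  assume i: "i \<in> idx_set L M"
  have "k * L + i k \<in> {1..L * M}" if "k < M" for k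
  proof -
    have "k * L + i k \<le> Suc k * L" using mem_idx_set[OF i that] by simp
    also have "\<dots> \<le> L * M" using that by (metis Suc_leI mult.commute mult_le_mono1)
    finally show ?thesis using mem_idx_set[OF i that] by simp
  qed
  thus ?thesis unfolding pair_code_def idx_set_def by auto
qed

lemma inj_on_pair_code: "inj_on (pair_code L M) (idx_set L M)"
proof (rule inj_onI)
  fix i i' assume i: "i \<in> idx_set L M" and i': "i' \<in> idx_set L M"
    and eq: "pair_code L M i = pair_code L M i'"
  show "i = i'"
  proof (rule PiE_ext)
    show "i \<in> PiE {..<M} (\<lambda>_. {1..L})" "i' \<in> PiE {..<M} (\<lambda>_. {1..L})"
      using i i' unfolding idx_set_def by auto
    fix k assume "k \<in> {..<M}"
    thus "i k = i' k" using fun_cong[OF eq, of k] unfolding pair_code_def by simp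
  qed
qed

lemma sum_idx_set_pair_code:
  assumes "\<And>i'. i' \<notin> pair_code L M ` idx_set L M \<Longrightarrow> h i' = 0"
  shows "(\<Sum>i'\<in>idx_set (L * M) M. h i') = (\<Sum>i\<in>idx_set L M. h (pair_code L M i))"
proof -
  have "(\<Sum>i'\<in>idx_set (L * M) M. h i') = (\<Sum>i'\<in>pair_code L M ` idx_set L M. h i')"
    using assms pair_code_mem by (intro sum.mono_neutral_right[OF finite_idx_set]) auto
  also have "\<dots> = (\<Sum>i\<in>idx_set L M. h (pair_code L M i))"
    by (simp add: sum.reindex[OF inj_on_pair_code])
  finally show ?thesis .
qed

text \<open>Components depending on the coordinate \<open>k\<close> as well as on \<open>j\<close> are merged into the single
  family indexed by \<open>k L + j \<in> {1..L M}\<close>.\<close>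
lemma MMEam_coordinatewise:
  fixes G :: "nat \<Rightarrow> nat \<Rightarrow> real \<Rightarrow> real" and q :: "(nat \<Rightarrow> nat) \<Rightarrow> real"
  assumes L: "1 \<le> L" and M: "1 \<le> M"
    and dens: "\<And>k j. k < M \<Longrightarrow> j \<in> {1..L} \<Longrightarrow> ME_density (G k j)"
    and qsum: "(\<Sum>i\<in>idx_set L M. q i) = 1"
    and rep: "\<And>x. nonneg_pt M x \<Longrightarrow> f x = (\<Sum>i\<in>idx_set L M. q i * (\<Prod>k<M. G k (i k) (x k)))"
    and nonneg: "\<And>x. nonneg_pt M x \<Longrightarrow> 0 \<le> f x"
  shows "MMEam M f"
proof -
  let ?code = "pair_code L M"
  define g where "g j' = G ((j' - 1) div L) ((j' - 1) mod L + 1)" for j'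
  define p where
    "p i' = (if i' \<in> ?code ` idx_set L M then q (the_inv_into (idx_set L M) ?code i') else 0)" for i'
  have g_code: "g (?code i k) = G k (i k)" if "i \<in> idx_set L M" "k < M" for i k
    using that pair_code_decode[OF mem_idx_set[OF that]] unfolding g_def pair_code_def by simp
  have p_code: "p (?code i) = q i" if "i \<in> idx_set L M" for i
    unfolding p_def using that the_inv_into_f_f[OF inj_on_pair_code that] by auto
  show ?thesis
    unfolding MMEam_def
  proof (intro exI[of _ "L * M"] exI[of _ g] exI[of _ p] conjI allI impI ballI)
    show "1 \<le> L * M" using L M by simp
    show "ME_density (g j')" if "j' \<in> {1..L * M}" for j'
      unfolding g_def using that L
      by (intro dens) (auto simp: less_mult_imp_div_less mult.commute Suc_leI)
    show "(\<Sum>i'\<in>idx_set (L * M) M. p i') = 1"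
      using qsum p_code by (subst sum_idx_set_pair_code) (auto simp: p_def)
    fix x assume x: "nonneg_pt M x"
    have "f x = (\<Sum>i\<in>idx_set L M. p (?code i) * (\<Prod>k<M. g (?code i k) (x k)))"
      unfolding rep[OF x] by (intro sum.cong refl) (simp add: p_code g_code)
    also have "\<dots> = (\<Sum>i'\<in>idx_set (L * M) M. p i' * (\<Prod>k<M. g (i' k) (x k)))"
      by (rule sum_idx_set_pair_code[symmetric]) (simp add: p_def)
    finally show "f x = (\<Sum>i'\<in>idx_set (L * M) M. p i' * (\<Prod>k<M. g (i' k) (x k)))" .
    show "0 \<le> f x" by (rule nonneg[OF x])
  qed
qed

locale ME_mixture =
  fixes L M :: nat and n :: "nat \<Rightarrow> nat"
    and \<alpha> :: "nat \<Rightarrow> real vec" and T :: "nat \<Rightarrow> real mat" and t :: "nat \<Rightarrow> real vec"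
    and p :: "(nat \<Rightarrow> nat) \<Rightarrow> real" and f :: "(nat \<Rightarrow> real) \<Rightarrow> real"
  assumes dens: "\<forall>j\<in>{1..L}. ME_density_triple (n j) (\<alpha> j) (T j) (t j)"
    and f_eq: "\<forall>x. f x = (\<Sum>i\<in>idx_set L M. p i * (\<Prod>k<M. ME_fun (\<alpha> (i k)) (T (i k)) (t (i k)) (x k)))"
begin

lemma component: "j \<in> {1..L} \<Longrightarrow> ME_nonneg (n j) (\<alpha> j) (T j) (t j)"
  using dens by (simp add: ME_nonneg_if_ME_density_triple)

definition surv_weight :: "(nat \<Rightarrow> real) \<Rightarrow> (nat \<Rightarrow> nat) \<Rightarrow> real" where
  "surv_weight z i = (\<Prod>k<M. ME_surv (\<alpha> (i k)) (T (i k)) (t (i k)) (z k))"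

lemma set_integral_joint_survival:
  assumes z: "nonneg_pt M z"
  shows "(LINT x:PiE {..<M} (\<lambda>k. {z k..})|PiM {..<M} (\<lambda>_. lborel). f x)
    = (\<Sum>i\<in>idx_set L M. p i * surv_weight z i)"
proof -
  let ?PM = "PiM {..<M} (\<lambda>_. lborel :: real measure)" and ?PE = "PiE {..<M} (\<lambda>k. {z k..})"
  let ?g = "\<lambda>i x. \<Prod>k<M. ME_fun (\<alpha> (i k)) (T (i k)) (t (i k)) (x k)"
  have comp: "ME_nonneg (n (i k)) (\<alpha> (i k)) (T (i k)) (t (i k))" "0 \<le> z k"
    if "i \<in> idx_set L M" "k < M" for i k
    using component[OF mem_idx_set[OF that]] z that unfolding nonneg_pt_def by auto
  have "set_integrable ?PM ?PE (?g i)" if "i \<in> idx_set L M" for i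
    by (rule set_integrable_PiE_prod[OF finite_lessThan],
        rule ME_nonneg.set_integral_Ici_ME_fun(1)[OF comp[OF that]]) simp_all
  hence int: "set_integrable ?PM ?PE (\<lambda>x. p i * ?g i x)" if "i \<in> idx_set L M" for i
    using that by simp
  have val: "(LINT x:?PE|?PM. ?g i x) = surv_weight z i" if "i \<in> idx_set L M" for i
  proof -
    have "(LINT x:?PE|?PM. ?g i x)
        = (\<Prod>k<M. LINT y:{z k..}|lborel. ME_fun (\<alpha> (i k)) (T (i k)) (t (i k)) y)"
      by (rule set_integral_PiE_prod[OF finite_lessThan],
          rule ME_nonneg.set_integral_Ici_ME_fun(1)[OF comp[OF that]]) simp_all
    also have "\<dots> = surv_weight z i"
      unfolding surv_weight_def
      by (rule prod.cong[OF refl], rule ME_nonneg.set_integral_Ici_ME_fun(2)[OF comp[OF that]]) simp_all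
    finally show ?thesis .
  qed
  have "(LINT x:?PE|?PM. f x) = (\<Sum>i\<in>idx_set L M. LINT x:?PE|?PM. p i * ?g i x)"
    unfolding f_eq[rule_format] set_lebesgue_integral_def scaleR_sum_right
    by (rule Bochner_Integration.integral_sum) (use int in \<open>simp add: set_integrable_def\<close>)
  also have "\<dots> = (\<Sum>i\<in>idx_set L M. p i * surv_weight z i)"
    using val by simp
  finally show ?thesis .
qed

lemma shifted_eq_residual_mixture:
  assumes z: "nonneg_pt M z" and x: "nonneg_pt M x"
  shows "f (\<lambda>k. x k + z k) = (\<Sum>i\<in>idx_set L M. p i * surv_weight z i *
    (\<Prod>k<M. ME_fun (ME_residual (\<alpha> (i k)) (T (i k)) (t (i k)) (z k)) (T (i k)) (t (i k)) (x k)))"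
  unfolding f_eq[rule_format] surv_weight_def using z x
  by (auto simp: nonneg_pt_def ME_nonneg.ME_fun_shift[OF component[OF mem_idx_set]]
      prod.distrib ac_simps intro!: sum.cong prod.cong)

lemma MMEam_residual:
  assumes L: "1 \<le> L" and M: "1 \<le> M" and f_nonneg: "\<forall>x. nonneg_pt M x \<longrightarrow> 0 \<le> f x"
    and z: "nonneg_pt M z" and pos: "0 < (\<Sum>i\<in>idx_set L M. p i * surv_weight z i)"
  shows "MMEam M (\<lambda>x. f (\<lambda>k. x k + z k) / (\<Sum>i\<in>idx_set L M. p i * surv_weight z i))"
proof -
  define D where "D = (\<Sum>i\<in>idx_set L M. p i * surv_weight z i)"
  define R where "R k j = ME_fun (ME_residual (\<alpha> j) (T j) (t j) (z k)) (T j) (t j)" for k j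
  \<comment> \<open>A component with vanishing survival cannot be normalised, but it only occurs with weight 0.\<close>
  define G where
    "G k j = (if 0 < ME_surv (\<alpha> j) (T j) (t j) (z k) then R k j else ME_fun (\<alpha> j) (T j) (t j))"
    for k j
  have zk: "0 \<le> z k" if "k < M" for k using z that unfolding nonneg_pt_def by simp
  have G_R: "p i * surv_weight z i * (\<Prod>k<M. R k (i k) (x k))
      = p i * surv_weight z i * (\<Prod>k<M. G k (i k) (x k))"
    if i: "i \<in> idx_set L M" for i x
  proof (cases "surv_weight z i = 0")
    case False
    hence "0 < ME_surv (\<alpha> (i k)) (T (i k)) (t (i k)) (z k)" if "k < M" for k
      using ME_nonneg.ME_surv_nonneg[OF component[OF mem_idx_set[OF i that]] zk[OF that]] that
      unfolding surv_weight_def by (fastforce simp: less_le)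
    thus ?thesis by (simp add: G_def)
  qed simp
  show ?thesis
    unfolding D_def[symmetric]
  proof (rule MMEam_coordinatewise[OF L M, where G = G and q = "\<lambda>i. p i * surv_weight z i / D"])
    show "ME_density (G k j)" if "k < M" "j \<in> {1..L}" for k j
      using dens that ME_nonneg.ME_density_triple_residual[OF component[OF that(2)] zk[OF that(1)]]
      unfolding G_def R_def ME_density_def by fastforce
    show "(\<Sum>i\<in>idx_set L M. p i * surv_weight z i / D) = 1"
      using pos unfolding D_def by (simp add: sum_divide_distrib[symmetric])
    fix x assume x: "nonneg_pt M x"
    show "f (\<lambda>k. x k + z k) / D
      = (\<Sum>i\<in>idx_set L M. p i * surv_weight z i / D * (\<Prod>k<M. G k (i k) (x k)))"
      unfolding shifted_eq_residual_mixture[OF z x] sum_divide_distrib R_def[symmetric]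
      by (intro sum.cong refl) (simp add: G_R)
    show "0 \<le> f (\<lambda>k. x k + z k) / D"
      using f_nonneg x z pos unfolding D_def nonneg_pt_def by simp
  qed
qed

end

theorem theorem2:
  fixes L M :: nat
    and n :: "nat \<Rightarrow> nat"
    and \<alpha> :: "nat \<Rightarrow> real vec" and T :: "nat \<Rightarrow> real mat" and t :: "nat \<Rightarrow> real vec"
    and p :: "(nat \<Rightarrow> nat) \<Rightarrow> real"
    and f :: "(nat \<Rightarrow> real) \<Rightarrow> real"
    and z :: "nat \<Rightarrow> real"
  assumes L: "1 \<le> L" and M: "1 \<le> M"
    and dens: "\<forall>j\<in>{1..L}. ME_density_triple (n j) (\<alpha> j) (T j) (t j)"
    and psum: "(\<Sum>i\<in>idx_set L M. p i) = 1"
    and f_def: "\<forall>x. f x = (\<Sum>i\<in>idx_set L M. p i * (\<Prod>k<M. ME_fun (\<alpha> (i k)) (T (i k)) (t (i k)) (x k)))"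
    and f_nonneg: "\<forall>x. nonneg_pt M x \<longrightarrow> 0 \<le> f x"
    and z_nonneg: "nonneg_pt M z"
    and Fbar_pos: "set_lebesgue_integral (PiM {..<M} (\<lambda>_. lborel)) (PiE {..<M} (\<lambda>k. {z k..})) f > 0"
  shows
    "MMEam M (\<lambda>x. f (\<lambda>k. x k + z k) /
        set_lebesgue_integral (PiM {..<M} (\<lambda>_. lborel)) (PiE {..<M} (\<lambda>k. {z k..})) f)
     \<and> (\<forall>x. nonneg_pt M x \<longrightarrow>
        f (\<lambda>k. x k + z k) /
        set_lebesgue_integral (PiM {..<M} (\<lambda>_. lborel)) (PiE {..<M} (\<lambda>k. {z k..})) f
        = (\<Sum>i\<in>idx_set L M.
             (p i * (\<Prod>k<M. scalar_prod (\<alpha> (i k)) (mat_exp (z k \<cdot>\<^sub>m T (i k)) *\<^sub>v ME_l (T (i k)) (t (i k))))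
              / (\<Sum>h\<in>idx_set L M. p h * (\<Prod>k<M. scalar_prod (\<alpha> (h k)) (mat_exp (z k \<cdot>\<^sub>m T (h k)) *\<^sub>v ME_l (T (h k)) (t (h k))))))
           * (\<Prod>k<M. ME_fun
                ((1 / scalar_prod (\<alpha> (i k)) (mat_exp (z k \<cdot>\<^sub>m T (i k)) *\<^sub>v ME_l (T (i k)) (t (i k))))
                   \<cdot>\<^sub>v vec_mat (\<alpha> (i k)) (mat_exp (z k \<cdot>\<^sub>m T (i k))))
                (T (i k)) (t (i k)) (x k))))"
proof -
  interpret ME_mixture L M n \<alpha> T t p f
    using dens f_def by unfold_locales
  note Fbar = set_integral_joint_survival[OF z_nonneg]
  have "MMEam M (\<lambda>x. f (\<lambda>k. x k + z k) / (\<Sum>i\<in>idx_set L M. p i * surv_weight z i))"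
    using MMEam_residual[OF L M f_nonneg z_nonneg] Fbar_pos unfolding Fbar by simp
  moreover have "f (\<lambda>k. x k + z k) / (\<Sum>i\<in>idx_set L M. p i * surv_weight z i)
      = (\<Sum>i\<in>idx_set L M. p i * surv_weight z i / (\<Sum>h\<in>idx_set L M. p h * surv_weight z h)
          * (\<Prod>k<M. ME_fun (ME_residual (\<alpha> (i k)) (T (i k)) (t (i k)) (z k)) (T (i k)) (t (i k))
              (x k)))"
    if "nonneg_pt M x" for x
    unfolding shifted_eq_residual_mixture[OF z_nonneg that] sum_divide_distrib by simp
  ultimately show ?thesis
    unfolding Fbar surv_weight_def ME_residual_def ME_surv_def by blast
qed

end
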